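(* Let $b$ be a prime, $s\in\mathbb{N}$, $\boldsymbol{k}=(k_1,\dots,k_s)\in\mathbb{N}_0^s$, and write $c_j:=\mu_1(k_j)$ and $u:=\{j\mid k_j\neq0\}$. Then for every $j$ and every $L_j\in\mathcal{L}_{\infty,\infty}$, the integer $\ell_j$ with $\vec\ell_j=L_j^\top\vec k_j$ satisfies $\mu_1(\ell_j)=c_j$. Moreover, for every $\boldsymbol{k}'=(k_1',\dots,k_s')\in\mathbb{N}_0^s$ with $\mu_1(k'_j)=c_j$ for all $j$, and every integer $n\ge\max_jc_j$, \[\Pr\left[L_j^\top\vec{k}_j=\vec{k}'_j\text{ for all }j\;\middle|\;L_j\in\mathcal{L}_{\infty,n}\right]=\left(\frac{b}{b-1}\right)^{|u|}b^{-(c_1+\cdots+c_s)},\] where $L_1,\dots,L_s$ are drawn independently at random from $\mathcal{L}_{\infty,n}$.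
   Context: $\mathbb{F}_b=\{0,\dots,b-1\}$ is the field with $b$ elements. For $k\in\mathbb{N}_0$ with $b$-adic expansion $k=\kappa_0+\kappa_1b+\cdots$, write $\vec{k}=(\kappa_0,\kappa_1,\ldots)^\top\in\mathbb{F}_b^{\mathbb{N}}$. NRT weight: for $k\in\mathbb{N}$ written as $k=\kappa_1b^{c_1-1}+\cdots+\kappa_vb^{c_v-1}$ with $\kappa_i\in\{1,\dots,b-1\}$ and $c_1>\cdots>c_v>0$, $\mu_1(k)=c_1$; $\mu_1(0)=0$. For $w,n\in\mathbb{N}\cup\{\infty\}$, $\mathcal{L}_{w,n}$ is the set of matrices $L=(\ell_{i,j})\in\mathbb{F}_b^{w\times n}$ with $\ell_{i,j}=0$ if $i<j$ and $\ell_{i,j}\neq0$ if $i=j$. A random element of $\mathcal{L}_{w,n}$ is obtained by choosing each entry independently: diagonal entries uniformly from $\mathbb{F}_b\setminus\{0\}$, entries with $i>j$ uniformly from $\mathbb{F}_b$, entries with $i<j$ equal to $0$. For $L\in\mathcal{L}_{\infty,n}$, $L^\top\vec k\in\mathbb{F}_b^n$ is the matrix-vector product over $\mathbb{F}_b$, compared with the first $n$ digits of $\vec k'_j$. *)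

theory Defs
  imports "HOL-Probability.Probability"
begin

text \<open>Elements of F_b are represented by the naturals 0..b-1 with arithmetic mod b.
  Indices of digit vectors and matrices are 0-based (paper: 1-based).\<close>

definition digit :: "nat \<Rightarrow> nat \<Rightarrow> nat \<Rightarrow> nat" where
  "digit b k i = k div b ^ i mod b"

definition mu1 :: "nat \<Rightarrow> nat \<Rightarrow> nat" where
  "mu1 b k = (if k = 0 then 0 else Suc (GREATEST i. digit b k i \<noteq> 0))"

definition in_L_inf :: "nat \<Rightarrow> (nat \<Rightarrow> nat \<Rightarrow> nat) \<Rightarrow> bool" where
  "in_L_inf b L \<longleftrightarrow> (\<forall>i j. L i j < b) \<and> (\<forall>i j. i < j \<longrightarrow> L i j = 0) \<and> (\<forall>i. L i i \<noteq> 0)"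

text \<open>Component c of L^T k over F_b (the sum over i is finite since k has finitely many
  nonzero digits).\<close>
definition trans_prod :: "nat \<Rightarrow> (nat \<Rightarrow> nat \<Rightarrow> nat) \<Rightarrow> nat \<Rightarrow> nat \<Rightarrow> nat" where
  "trans_prod b L k c = (\<Sum>i\<in>{i. digit b k i \<noteq> 0}. L i c * digit b k i) mod b"

text \<open>Distribution of entry (i,c) (row i, column c) of a random element of L_{w,n}.\<close>
definition entry_pmf :: "nat \<Rightarrow> nat \<Rightarrow> nat \<Rightarrow> nat pmf" where
  "entry_pmf b i c = (if i < c then return_pmf 0
                      else if i = c then pmf_of_set {1..<b} else pmf_of_set {..<b})"

text \<open>s independent random matrices L_0..L_{s-1} in L_{infinity,n}: the entry (i,c) of
  L_j is the coordinate (j,i,c); all entries independent.\<close>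
definition rand_mats :: "nat \<Rightarrow> nat \<Rightarrow> nat \<Rightarrow> (nat \<times> nat \<times> nat \<Rightarrow> nat) measure" where
  "rand_mats b s n = PiM ({..<s} \<times> UNIV \<times> {..<n})
                        (\<lambda>(j, i, c). measure_pmf (entry_pmf b i c))"

end

theory Submission
  imports Defs
begin

text \<open>Let \<open>k \<noteq> 0\<close> and let \<open>t = \<mu>\<^sub>1(k) - 1\<close> be the position of its leading digit \<open>\<kappa>\<^sub>t\<close>.
  Digit c of \<open>L\<^sup>T k\<close> is \<open>\<Sum>\<^sub>i L i c \<kappa>\<^sub>i mod b\<close>, summed over the positions \<open>i \<le> t\<close> of the
  nonzero digits of k. As L is lower triangular, this vanishes for \<open>c > t\<close> and equals
  \<open>L t t \<kappa>\<^sub>t mod b\<close> for \<open>c = t\<close>, which is nonzero because b is prime; so \<open>L\<^sup>T k\<close> has the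
  same weight as k.

  For random matrices, the equations for different pairs (matrix j, column c) involve disjoint sets
  of independent entries, so the probability factorises over the pairs. Columns \<open>c > t\<close>
  always match (both sides vanish, since \<open>k'\<^sub>j\<close> has the same weight). Column t matches with
  probability \<open>1/(b-1)\<close>, the diagonal entry being uniform on the units. A column \<open>c < t\<close> matches
  with probability \<open>1/b\<close>: its sum contains the uniform entry \<open>L t c\<close> multiplied by the unit
  \<open>\<kappa>\<^sub>t\<close>, independently of all other terms.\<close>

section \<open>Digits and the NRT weight\<close>

lemma digit_0 [simp]: "digit b 0 i = 0"
  by (simp add: digit_def)

lemma digit_Suc: "digit b k (Suc i) = digit b (k div b) i"
  by (simp add: digit_def div_mult2_eq)

lemma digit_less: "0 < b \<Longrightarrow> digit b k i < b"
  by (simp add: digit_def)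

lemma digit_eq_0_if_le:
  assumes "2 \<le> b" "k \<le> i"
  shows "digit b k i = 0"
proof -
  have "k < 2 ^ i" using assms(2) less_exp[of i] by linarith
  also have "\<dots> \<le> b ^ i" using assms(1) by (simp add: power_mono)
  finally show ?thesis by (simp add: digit_def)
qed

lemma ex_digit_neq_0:
  assumes "2 \<le> b" "k \<noteq> 0"
  shows "\<exists>i. digit b k i \<noteq> 0"
  using assms(2)
proof (induction k rule: less_induct)
  case (less k)
  show ?case
  proof (cases "k mod b = 0")
    case True
    then have "k div b \<noteq> 0" "k div b < k" using less.prems assms(1) by auto
    then obtain i where "digit b (k div b) i \<noteq> 0" using less.IH by blast
    then show ?thesis by (metis digit_Suc)
  next
    case False
    then show ?thesis by (metis digit_def div_by_1 power_0)
  qed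
qed

lemma mu1_eq_0_iff [simp]: "mu1 b k = 0 \<longleftrightarrow> k = 0"
  by (simp add: mu1_def)

lemma
  assumes "2 \<le> b"
  shows digit_pred_mu1_neq_0: "k \<noteq> 0 \<Longrightarrow> digit b k (mu1 b k - 1) \<noteq> 0"
    and digit_eq_0_if_mu1_le: "mu1 b k \<le> i \<Longrightarrow> digit b k i = 0"
proof -
  have bounded: "i \<le> k" if "digit b k i \<noteq> 0" for i
    using digit_eq_0_if_le[OF assms, of k i] that by linarith
  show "digit b k (mu1 b k - 1) \<noteq> 0" if k: "k \<noteq> 0"
  proof -
    obtain i where "digit b k i \<noteq> 0" using ex_digit_neq_0[OF assms k] ..
    then have "digit b k (GREATEST i. digit b k i \<noteq> 0) \<noteq> 0"
      by (rule GreatestI_nat) (rule bounded)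
    then show ?thesis using k by (simp add: mu1_def)
  qed
  show "digit b k i = 0" if "mu1 b k \<le> i"
  proof (rule ccontr)
    assume i: "digit b k i \<noteq> 0"
    then have "i \<le> (GREATEST i. digit b k i \<noteq> 0)"
      by (rule Greatest_le_nat) (rule bounded)
    moreover have "k \<noteq> 0" using i by (cases "k = 0") simp_all
    ultimately show False using that by (simp add: mu1_def)
  qed
qed

lemma digit_support_subset: "2 \<le> b \<Longrightarrow> {i. digit b k i \<noteq> 0} \<subseteq> {..<mu1 b k}"
  using digit_eq_0_if_mu1_le[of b k] not_less by blast

lemma finite_digit_support: "2 \<le> b \<Longrightarrow> finite {i. digit b k i \<noteq> 0}"
  using digit_support_subset finite_subset by blast

lemma mu1_eqI:
  assumes "2 \<le> b" and above: "\<And>i. m \<le> i \<Longrightarrow> digit b l i = 0"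
    and top: "m \<noteq> 0 \<Longrightarrow> digit b l (m - 1) \<noteq> 0"
  shows "mu1 b l = m"
proof (cases "m = 0")
  case True
  then have "l = 0" using above ex_digit_neq_0[OF assms(1), of l] by auto
  then show ?thesis using True by simp
next
  case False
  then have l: "l \<noteq> 0" using top by (metis digit_0)
  have "(GREATEST i. digit b l i \<noteq> 0) = m - 1"
  proof (rule Greatest_equality)
    show "digit b l (m - 1) \<noteq> 0" using top False .
    show "i \<le> m - 1" if "digit b l i \<noteq> 0" for i
      using above[of i] that by linarith
  qed
  then show ?thesis using l False by (simp add: mu1_def)
qed

lemma ex_digits_eq:
  assumes "0 < b" "\<And>c. a c < b" "\<And>c. m \<le> c \<Longrightarrow> a c = 0"
  shows "\<exists>l. \<forall>c. digit b l c = a c"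
  using assms(2,3)
proof (induction m arbitrary: a)
  case 0
  then show ?case by (intro exI[of _ 0]) auto
next
  case (Suc m)
  obtain l where l: "\<forall>c. digit b l c = a (Suc c)"
    using Suc.IH[of "\<lambda>c. a (Suc c)"] Suc.prems by auto
  have "(a 0 + b * l) div b = l"
    using Suc.prems(1)[of 0] by simp
  then have "digit b (a 0 + b * l) c = a c" for c
    using Suc.prems(1)[of 0] l by (cases c) (simp_all add: digit_def[of _ _ 0] digit_Suc)
  then show ?case by blast
qed

lemma prime_mult_mod_neq_0:
  fixes b x y :: nat
  assumes "prime b" "0 < x" "x < b" "0 < y" "y < b"
  shows "x * y mod b \<noteq> 0"
proof -
  have "\<not> b dvd x * y"
    unfolding prime_dvd_mult_iff[OF assms(1)]
    using nat_dvd_not_less[OF assms(2,3)] nat_dvd_not_less[OF assms(4,5)] by blast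
  then show ?thesis
    by (simp add: dvd_eq_mod_eq_0)
qed

lemma trans_prod_less: "0 < b \<Longrightarrow> trans_prod b L k c < b"
  by (simp add: trans_prod_def)

lemma trans_prod_eq_0:
  assumes "2 \<le> b" "\<And>i. i < c \<Longrightarrow> L i c = 0" "mu1 b k \<le> c"
  shows "trans_prod b L k c = 0"
proof -
  have "i < c" if "digit b k i \<noteq> 0" for i
    using digit_support_subset[OF assms(1), of k] assms(3) that by auto
  then have "(\<Sum>i\<in>{i. digit b k i \<noteq> 0}. L i c * digit b k i) = 0"
    using assms(2) by (intro sum.neutral) simp
  then show ?thesis by (simp add: trans_prod_def)
qed

lemma trans_prod_split_top:
  assumes "2 \<le> b" "k \<noteq> 0"
  defines "t \<equiv> mu1 b k - 1"
  shows "trans_prod b L k c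
    = (L t c * digit b k t + (\<Sum>i\<in>{i. digit b k i \<noteq> 0} - {t}. L i c * digit b k i)) mod b"
  unfolding trans_prod_def t_def
  using finite_digit_support[OF assms(1)] digit_pred_mu1_neq_0[OF assms(1,2)]
  by (subst sum.remove) auto

lemma trans_prod_top:
  assumes "2 \<le> b" "k \<noteq> 0" and t: "t = mu1 b k - 1" and upper: "\<And>i. i < t \<Longrightarrow> L i t = 0"
  shows "trans_prod b L k t = L t t * digit b k t mod b"
proof -
  have "i < t" if "digit b k i \<noteq> 0" "i \<noteq> t" for i
    using digit_support_subset[OF assms(1), of k] that t by auto
  then have "(\<Sum>i\<in>{i. digit b k i \<noteq> 0} - {t}. L i t * digit b k i) = 0"
    by (intro sum.neutral) (auto simp: upper)
  then show ?thesis
    using trans_prod_split_top[OF assms(1,2), of L t] t by simp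
qed

lemma mu1_trans_prod:
  assumes "prime b" "in_L_inf b L"
  shows "\<exists>l. (\<forall>c. digit b l c = trans_prod b L k c) \<and> mu1 b l = mu1 b k"
proof -
  have b: "2 \<le> b" using assms(1) prime_ge_2_nat by blast
  have upper: "\<And>i c. i < c \<Longrightarrow> L i c = 0" using assms(2) by (simp add: in_L_inf_def)
  have zero: "trans_prod b L k c = 0" if "mu1 b k \<le> c" for c
    using trans_prod_eq_0[OF b _ that] upper by blast
  have "\<exists>l. \<forall>c. digit b l c = trans_prod b L k c"
    by (rule ex_digits_eq[of b _ "mu1 b k"]) (use b trans_prod_less zero in auto)
  then obtain l where l: "\<forall>c. digit b l c = trans_prod b L k c" ..
  have "mu1 b l = mu1 b k"
  proof (rule mu1_eqI[OF b])
    show "digit b l i = 0" if "mu1 b k \<le> i" for i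
      using l zero[OF that] by simp
    define t where "t = mu1 b k - 1"
    assume "mu1 b k \<noteq> 0"
    then have "k \<noteq> 0" by simp
    then have "trans_prod b L k t = L t t * digit b k t mod b"
      using trans_prod_top[OF b _ t_def] upper by blast
    moreover have "0 < L t t" "L t t < b"
      using assms(2) by (auto simp: in_L_inf_def)
    moreover have "0 < digit b k t" "digit b k t < b"
      using digit_pred_mu1_neq_0[OF b \<open>k \<noteq> 0\<close>] digit_less[of b k t] b by (auto simp: t_def)
    ultimately show "digit b l t \<noteq> 0"
      using l prime_mult_mod_neq_0[OF assms(1), of "L t t" "digit b k t"] by simp
  qed
  with l show ?thesis by blast
qed

section \<open>Linear congruences with a uniform unknown\<close>

lemma card_linear_mod_eq:
  fixes b \<kappa> r d :: nat
  assumes "prime b" "\<not> b dvd \<kappa>" "d < b"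
  shows "card {y \<in> {..<b}. (y * \<kappa> + r) mod b = d} = 1"
proof -
  let ?f = "\<lambda>y. (y * \<kappa> + r) mod b"
  have eq: "u = v" if "u \<le> v" "v < b" "?f u = ?f v" for u v
  proof -
    have "b dvd (v * \<kappa> + r) - (u * \<kappa> + r)"
      using that by (subst mod_eq_dvd_iff_nat[symmetric]) auto
    also have "(v * \<kappa> + r) - (u * \<kappa> + r) = (v - u) * \<kappa>"
      by (simp add: diff_mult_distrib)
    finally have "b dvd v - u"
      using assms(1,2) prime_dvd_mult_iff by blast
    moreover have "v - u < b" using that by linarith
    ultimately have "v - u = 0" by (meson nat_dvd_not_less not_gr0)
    then show ?thesis using that by simp
  qed
  have inj: "inj_on ?f {..<b}"
  proof (rule inj_onI)
    fix u v assume "u \<in> {..<b}" "v \<in> {..<b}" "?f u = ?f v"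
    then show "u = v" using eq[of u v] eq[of v u] by (cases "u \<le> v") auto
  qed
  have "?f ` {..<b} = {..<b}"
    by (rule endo_inj_surj) (use inj prime_gt_0_nat[OF assms(1)] in auto)
  then have "d \<in> ?f ` {..<b}" using assms(3) by simp
  then obtain y0 where "y0 < b" "?f y0 = d" by auto
  with inj have "{y \<in> {..<b}. ?f y = d} = {y0}"
    unfolding inj_on_def by blast
  then show ?thesis by simp
qed

lemma prob_uniform_linear_mod:
  fixes b \<kappa> r d :: nat
  assumes "prime b" "\<not> b dvd \<kappa>" "d < b"
  shows "measure_pmf.prob (pmf_of_set {..<b}) {y. (y * \<kappa> + r) mod b = d} = 1 / b"
  using card_linear_mod_eq[OF assms, of r] prime_gt_0_nat[OF assms(1)]
  by (subst measure_pmf_of_set) (auto simp: Int_def)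

lemma prob_uniform_nonzero_mult_mod:
  fixes b \<kappa> d :: nat
  assumes "prime b" "\<not> b dvd \<kappa>" "0 < d" "d < b"
  shows "measure_pmf.prob (pmf_of_set {1..<b}) {y. y * \<kappa> mod b = d} = 1 / (real b - 1)"
proof -
  have b: "1 < b" using assms(1) prime_gt_1_nat by blast
  have "{1..<b} \<inter> {y. y * \<kappa> mod b = d} = {y \<in> {..<b}. (y * \<kappa> + 0) mod b = d}"
    using assms(3) by (auto simp: Suc_le_eq intro!: gr0I)
  then have "card ({1..<b} \<inter> {y. y * \<kappa> mod b = d}) = 1"
    using card_linear_mod_eq[OF assms(1,2,4), of 0] by simp
  then show ?thesis
    using b by (subst measure_pmf_of_set) (auto simp: of_nat_diff)
qed

section \<open>Products of probability mass functions\<close>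

lemma (in product_prob_space) indep_vars_components:
  "P.indep_vars M (\<lambda>i \<omega>. \<omega> i) I"
proof -
  have rv: "\<And>i. i \<in> I \<Longrightarrow> P.random_variable (M i) (\<lambda>\<omega>. \<omega> i)"
    by (rule measurable_component_singleton)
  have "P.indep_vars M (\<lambda>i \<omega>. \<omega> i) J" if J: "J \<subseteq> I" "J \<noteq> {}" "finite J" for J
  proof (subst P.indep_vars_iff_distr_eq_PiM')
    show "\<And>i. i \<in> J \<Longrightarrow> P.random_variable (M i) (\<lambda>\<omega>. \<omega> i)" using rv J by auto
    have "distr (PiM I M) (PiM J M) (\<lambda>\<omega>. restrict \<omega> J) = PiM J M"
      by (rule distr_PiM_restrict_finite) (use J in auto)
    also have "PiM J M = PiM J (\<lambda>i. distr (PiM I M) (M i) (\<lambda>\<omega>. \<omega> i))"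
      by (rule PiM_cong) (use J PiM_component in auto)
    finally show "distr (PiM I M) (PiM J M) (\<lambda>\<omega>. \<lambda>i\<in>J. \<omega> i) = PiM J (\<lambda>i. distr (PiM I M) (M i) (\<lambda>\<omega>. \<omega> i))"
      by (simp add: restrict_def)
  qed fact
  then show ?thesis
    unfolding P.indep_vars_def using rv
    by (subst P.indep_sets_finite_index_sets) blast
qed

locale pmf_product_space =
  fixes p :: "'i \<Rightarrow> 'a::countable pmf" and I :: "'i set"
begin

abbreviation PM :: "('i \<Rightarrow> 'a) measure" where
  "PM \<equiv> PiM I (\<lambda>x. measure_pmf (p x))"

end

sublocale pmf_product_space \<subseteq> product_prob_space "\<lambda>x. measure_pmf (p x)" I
  by (rule product_prob_spaceI) (rule measure_pmf.prob_space_axioms)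

context pmf_product_space
begin

lemma sets_PiM_finite_pmf:
  assumes "finite K"
  shows "A \<inter> space (PiM K (\<lambda>x. measure_pmf (p x))) \<in> sets (PiM K (\<lambda>x. measure_pmf (p x)))"
proof -
  let ?S = "space (PiM K (\<lambda>x. measure_pmf (p x)))"
  have S: "?S = PiE K (\<lambda>_. UNIV)" by (simp add: space_PiM)
  have "countable (A \<inter> ?S)"
    using countable_PiE[OF assms, of "\<lambda>_. UNIV :: 'a set"] S by (auto intro: countable_subset)
  moreover have "A \<inter> ?S = (\<Union>\<omega>\<in>A \<inter> ?S. PiE K (\<lambda>x. {\<omega> x}))"
    using S by (auto simp: PiE_iff extensional_def) (metis ext)
  ultimately show ?thesis
    by (metis sets.countable_UN'' sets_PiM_I_finite[OF assms] sets_measure_pmf UNIV_I)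
qed

lemma sets_Collect_finitely_determined:
  assumes "finite J" "J \<subseteq> I" and determined: "\<And>\<omega>. Q \<omega> = Q (restrict \<omega> J)"
  shows "{\<omega> \<in> space PM. Q \<omega>} \<in> sets PM"
proof -
  have restr: "(\<lambda>\<omega>. restrict \<omega> J) \<in> measurable PM (PiM J (\<lambda>x. measure_pmf (p x)))"
    by (rule measurable_restrict_subset) fact
  have "(\<lambda>\<omega>. restrict \<omega> J) -` ({z. Q z} \<inter> space (PiM J (\<lambda>x. measure_pmf (p x)))) \<inter> space PM \<in> sets PM"
    by (rule measurable_sets[OF restr sets_PiM_finite_pmf[OF assms(1)]])
  also have "(\<lambda>\<omega>. restrict \<omega> J) -` ({z. Q z} \<inter> space (PiM J (\<lambda>x. measure_pmf (p x)))) \<inter> space PM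
      = {\<omega> \<in> space PM. Q \<omega>}"
    using measurable_space[OF restr] by (auto simp: determined[symmetric])
  finally show ?thesis .
qed

lemma prob_component:
  assumes "x \<in> I"
  shows "prob {\<omega> \<in> space PM. \<omega> x \<in> A} = measure_pmf.prob (p x) A"
proof -
  have "emeasure PM {\<omega> \<in> space PM. \<omega> x \<in> A} = emeasure (measure_pmf (p x)) A"
    using emeasure_PiM_Collect_single[OF assms] by simp
  then show ?thesis
    unfolding P.emeasure_eq_measure measure_pmf.emeasure_eq_measure by simp
qed

lemma AE_component_in_set_pmf: "x \<in> I \<Longrightarrow> AE \<omega> in PM. \<omega> x \<in> set_pmf (p x)"
  by (rule AE_component) (auto intro: AE_measure_pmf)

lemma prob_disjoint_blocks:
  assumes "finite B" and K: "\<And>j. j \<in> B \<Longrightarrow> finite (K j) \<and> K j \<subseteq> I"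
    and disj: "disjoint_family_on K B"
    and determined: "\<And>j \<omega>. j \<in> B \<Longrightarrow> Q j \<omega> = Q j (restrict \<omega> (K j))"
  shows "prob {\<omega> \<in> space PM. \<forall>j\<in>B. Q j \<omega>} = (\<Prod>j\<in>B. prob {\<omega> \<in> space PM. Q j \<omega>})"
proof (cases "B = {}")
  case True
  then show ?thesis by (simp add: P.prob_space)
next
  case False
  let ?PK = "\<lambda>j. PiM (K j) (\<lambda>x. measure_pmf (p x))"
  define A where "A j = {z. Q j z} \<inter> space (?PK j)" for j
  have A: "A j \<in> sets (?PK j)" if "j \<in> B" for j
    unfolding A_def using K[OF that] by (intro sets_PiM_finite_pmf) simp
  have block: "(\<lambda>\<omega>. restrict \<omega> (K j)) -` A j \<inter> space PM = {\<omega> \<in> space PM. Q j \<omega>}"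
    if "j \<in> B" for j
    using measurable_space[OF measurable_restrict_subset[of "K j" I]] K[OF that]
    by (auto simp: A_def determined[OF that, symmetric])
  have "indep_vars ?PK (\<lambda>j \<omega>. restrict \<omega> (K j)) B"
    using indep_vars_restrict[OF indep_vars_components, of B K] K disj by simp
  then have "prob (\<Inter>j\<in>B. (\<lambda>\<omega>. restrict \<omega> (K j)) -` A j \<inter> space PM)
      = (\<Prod>j\<in>B. prob ((\<lambda>\<omega>. restrict \<omega> (K j)) -` A j \<inter> space PM))"
    by (rule indep_varsD[OF _ False assms(1) subset_refl A])
  moreover have "{\<omega> \<in> space PM. \<forall>j\<in>B. Q j \<omega>} = (\<Inter>j\<in>B. (\<lambda>\<omega>. restrict \<omega> (K j)) -` A j \<inter> space PM)"
    using False block by auto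
  ultimately show ?thesis
    using block by simp
qed

lemma prob_component_inter_indep:
  assumes x: "x \<in> I" and K: "finite K" "K \<subseteq> I" "x \<notin> K"
    and determined: "\<And>\<omega>. Q \<omega> = Q (restrict \<omega> K)"
  shows "prob {\<omega> \<in> space PM. \<omega> x \<in> A \<and> Q \<omega>} = measure_pmf.prob (p x) A * prob {\<omega> \<in> space PM. Q \<omega>}"
proof -
  let ?K = "\<lambda>b. if b then {x} else K"
  let ?Q = "\<lambda>b \<omega>. if b then \<omega> x \<in> A else Q \<omega>"
  have "{\<omega> \<in> space PM. \<omega> x \<in> A \<and> Q \<omega>} = {\<omega> \<in> space PM. \<forall>b\<in>UNIV. ?Q b \<omega>}"
    by (auto simp: UNIV_bool)
  also have "prob \<dots> = (\<Prod>b\<in>UNIV. prob {\<omega> \<in> space PM. ?Q b \<omega>})"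
  proof (rule prob_disjoint_blocks)
    show "disjoint_family_on ?K UNIV"
      using K by (auto simp: disjoint_family_on_def)
    show "?Q b \<omega> = ?Q b (restrict \<omega> (?K b))" for b \<omega>
      by (cases b) (simp_all add: determined[symmetric])
  qed (use x K in auto)
  also have "\<dots> = measure_pmf.prob (p x) A * prob {\<omega> \<in> space PM. Q \<omega>}"
    using prob_component[OF x] by (simp add: UNIV_bool)
  finally show ?thesis .
qed

text \<open>Conditioning on the value of g, which does not look at coordinate x.\<close>

lemma prob_component_indep_const:
  assumes x: "x \<in> I" and K: "finite K" "K \<subseteq> I" "x \<notin> K" and "finite R"
    and g_range: "\<And>\<omega>. g \<omega> \<in> R" and determined: "\<And>\<omega>. g \<omega> = g (restrict \<omega> K)"
    and const: "\<And>r. r \<in> R \<Longrightarrow> measure_pmf.prob (p x) {y. F y r} = q"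
  shows "prob {\<omega> \<in> space PM. F (\<omega> x) (g \<omega>)} = q"
proof -
  define G where "G r = {\<omega> \<in> space PM. g \<omega> = r}" for r
  define H where "H r = {\<omega> \<in> space PM. \<omega> x \<in> {y. F y r} \<and> g \<omega> = r}" for r
  have G: "G r \<in> events" for r
    unfolding G_def using K by (intro sets_Collect_finitely_determined) (auto simp: determined[symmetric])
  have "H r = {\<omega> \<in> space PM. F (\<omega> x) r} \<inter> G r" for r
    by (auto simp: H_def G_def)
  moreover have "{\<omega> \<in> space PM. F (\<omega> x) r} \<in> events" for r
    using x by (intro sets_Collect_finitely_determined[of "{x}"]) auto
  ultimately have H_events: "H r \<in> events" for r
    using G by auto
  have "{\<omega> \<in> space PM. F (\<omega> x) (g \<omega>)} = (\<Union>r\<in>R. H r)"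
    using g_range by (auto simp: H_def)
  then have "prob {\<omega> \<in> space PM. F (\<omega> x) (g \<omega>)} = (\<Sum>r\<in>R. prob (H r))"
    using \<open>finite R\<close> H_events
    by (auto intro!: P.finite_measure_finite_Union simp: disjoint_family_on_def H_def)
  also have "\<dots> = (\<Sum>r\<in>R. q * prob (G r))"
  proof (rule sum.cong[OF refl])
    fix r assume "r \<in> R"
    have "prob (H r) = measure_pmf.prob (p x) {y. F y r} * prob (G r)"
      unfolding H_def G_def by (rule prob_component_inter_indep[OF x K]) (simp add: determined[symmetric])
    then show "prob (H r) = q * prob (G r)"
      using const[OF \<open>r \<in> R\<close>] by simp
  qed
  also have "\<dots> = q * (\<Sum>r\<in>R. prob (G r))"
    by (simp add: sum_distrib_left)
  also have "(\<Sum>r\<in>R. prob (G r)) = prob (\<Union>r\<in>R. G r)"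
    using \<open>finite R\<close> G
    by (auto intro!: P.finite_measure_finite_Union[symmetric] simp: disjoint_family_on_def G_def)
  also have "(\<Union>r\<in>R. G r) = space PM"
    using g_range by (auto simp: G_def)
  finally show ?thesis
    by (simp add: P.prob_space)
qed

end

section \<open>Random lower-triangular matrices\<close>

definition entry_pmfs :: "nat \<Rightarrow> nat \<times> nat \<times> nat \<Rightarrow> nat pmf" where
  "entry_pmfs b = (\<lambda>(j, i, c). entry_pmf b i c)"

lemma entry_pmfs_apply [simp]: "entry_pmfs b (j, i, c) = entry_pmf b i c"
  by (simp add: entry_pmfs_def)

lemma trans_prod_restrict:
  assumes "{j} \<times> {i. digit b k i \<noteq> 0} \<times> {c} \<subseteq> J"
  shows "trans_prod b (\<lambda>i c. restrict \<omega> J (j, i, c)) k c = trans_prod b (\<lambda>i c. \<omega> (j, i, c)) k c"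
  unfolding trans_prod_def using assms
  by (intro arg_cong[where f="\<lambda>x. x mod b"] sum.cong) auto

definition column_prob :: "nat \<Rightarrow> nat \<Rightarrow> nat \<Rightarrow> real" where
  "column_prob b m c = (if m \<le> c then 1 else if c = m - 1 then 1 / (real b - 1) else 1 / real b)"

lemma prod_column_prob:
  assumes "1 < b" "m \<le> n"
  shows "(\<Prod>c<n. column_prob b m c) = (if m = 0 then 1 else real b / (real b - 1)) / real b ^ m"
proof (cases m)
  case 0
  then show ?thesis by (simp add: column_prob_def)
next
  case (Suc t)
  have "(\<Prod>c<n. column_prob b m c) = (\<Prod>c<m. column_prob b m c)"
    using assms(2) by (intro prod.mono_neutral_right) (auto simp: column_prob_def)
  also have "\<dots> = (\<Prod>c<t. 1 / real b) * (1 / (real b - 1))"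
    by (simp add: Suc column_prob_def)
  also have "\<dots> = (real b / (real b - 1)) / real b ^ m"
    using assms(1) by (simp add: Suc field_simps power_one_over)
  finally show ?thesis
    using Suc by simp
qed

locale random_matrices =
  fixes b s n :: nat
  assumes prime_b: "prime b"

sublocale random_matrices \<subseteq> pmf_product_space "entry_pmfs b" "{..<s} \<times> UNIV \<times> {..<n}" .

context random_matrices
begin

lemma two_le_b: "2 \<le> b"
  using prime_b prime_ge_2_nat by blast

lemma PM_eq_rand_mats: "PM = rand_mats b s n"
  unfolding rand_mats_def entry_pmfs_def by (simp add: case_prod_beta')

abbreviation column_event :: "nat \<Rightarrow> nat \<Rightarrow> nat \<Rightarrow> nat \<Rightarrow> (nat \<times> nat \<times> nat \<Rightarrow> nat) set" where
  "column_event j k k' c \<equiv> {\<omega> \<in> space PM. trans_prod b (\<lambda>i c. \<omega> (j, i, c)) k c = digit b k' c}"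

lemma column_event_sets:
  assumes "j < s" "c < n"
  shows "column_event j k k' c \<in> events"
proof (rule sets_Collect_finitely_determined)
  let ?J = "{j} \<times> {i. digit b k i \<noteq> 0} \<times> {c}"
  show "finite ?J" using finite_digit_support[OF two_le_b] by simp
  show "?J \<subseteq> {..<s} \<times> UNIV \<times> {..<n}" using assms by auto
  show "(trans_prod b (\<lambda>i c. \<omega> (j, i, c)) k c = digit b k' c)
    = (trans_prod b (\<lambda>i c. restrict \<omega> ?J (j, i, c)) k c = digit b k' c)" for \<omega>
    by (subst trans_prod_restrict) auto
qed

lemma AE_above_diagonal_eq_0:
  assumes "j < s" "c < n"
  shows "AE \<omega> in PM. \<forall>i<c. \<omega> (j, i, c) = 0"
proof -
  have "AE \<omega> in PM. \<forall>i\<in>{..<c}. \<omega> (j, i, c) = 0"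
  proof (rule AE_finite_allI)
    fix i assume "i \<in> {..<c}"
    then show "AE \<omega> in PM. \<omega> (j, i, c) = 0"
      using AE_component_in_set_pmf[of "(j, i, c)"] assms by (simp add: entry_pmf_def)
  qed simp
  then show ?thesis
    by eventually_elim auto
qed

lemma prob_column_event_beyond_mu1:
  assumes "j < s" "c < n" "mu1 b k' = mu1 b k" "mu1 b k \<le> c"
  shows "prob (column_event j k k' c) = 1"
proof -
  have "AE \<omega> in PM. trans_prod b (\<lambda>i c. \<omega> (j, i, c)) k c = digit b k' c"
    using AE_above_diagonal_eq_0[OF assms(1,2)] by eventually_elim
      (use assms(3,4) in \<open>simp add: trans_prod_eq_0[OF two_le_b] digit_eq_0_if_mu1_le[OF two_le_b]\<close>)
  then show ?thesis
    using P.prob_Collect_eq_1 column_event_sets[OF assms(1,2)] by simp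
qed

lemma prob_column_event_pred_mu1:
  assumes "j < s" "c < n" "mu1 b k' = mu1 b k" "k \<noteq> 0" "c = mu1 b k - 1"
  shows "prob (column_event j k k' c) = 1 / (real b - 1)"
proof -
  define \<kappa> where "\<kappa> = digit b k c"
  define d where "d = digit b k' c"
  define B where "B = {\<omega> \<in> space PM. \<omega> (j, c, c) \<in> {y. y * \<kappa> mod b = d}}"
  have "k' \<noteq> 0" using assms(3,4) by (metis mu1_eq_0_iff)
  then have "d \<noteq> 0" "\<kappa> \<noteq> 0"
    using assms(3-5) digit_pred_mu1_neq_0[OF two_le_b, of k'] digit_pred_mu1_neq_0[OF two_le_b, of k]
    by (simp_all add: d_def \<kappa>_def)
  then have "0 < d" "d < b" "\<not> b dvd \<kappa>"
    using two_le_b digit_less[of b] nat_dvd_not_less by (auto simp: d_def \<kappa>_def)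
  have "AE \<omega> in PM. \<omega> \<in> column_event j k k' c \<longleftrightarrow> \<omega> \<in> B"
    using AE_above_diagonal_eq_0[OF assms(1,2)] by eventually_elim
      (use assms(4,5) in \<open>simp add: B_def d_def \<kappa>_def trans_prod_top[OF two_le_b]\<close>)
  moreover have "B \<in> events"
    unfolding B_def using assms(1,2) by (intro sets_Collect_finitely_determined[of "{(j, c, c)}"]) auto
  ultimately have "prob (column_event j k k' c) = prob B"
    using column_event_sets[OF assms(1,2)] measure_eq_AE by blast
  also have "\<dots> = measure_pmf.prob (pmf_of_set {1..<b}) {y. y * \<kappa> mod b = d}"
    unfolding B_def using assms(1,2) prob_component[of "(j, c, c)" "{y. y * \<kappa> mod b = d}"]
    by (simp add: entry_pmf_def)
  also have "\<dots> = 1 / (real b - 1)"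
    by (rule prob_uniform_nonzero_mult_mod[OF prime_b]) fact+
  finally show ?thesis .
qed

lemma prob_column_event_below_pred_mu1:
  assumes "j < s" "c < n" "c < mu1 b k - 1"
  shows "prob (column_event j k k' c) = 1 / b"
proof -
  define t where "t = mu1 b k - 1"
  define S where "S = {i. digit b k i \<noteq> 0} - {t}"
  define g where "g \<omega> = (\<Sum>i\<in>S. \<omega> (j, i, c) * digit b k i) mod b" for \<omega> :: "_ \<Rightarrow> nat"
  have "k \<noteq> 0" using assms(3) by (auto simp: mu1_def split: if_splits)
  then have "column_event j k k' c = {\<omega> \<in> space PM. (\<omega> (j, t, c) * digit b k t + g \<omega>) mod b = digit b k' c}"
    unfolding g_def S_def t_def by (simp add: trans_prod_split_top[OF two_le_b] mod_add_right_eq)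
  also have "prob \<dots> = 1 / b"
  proof (rule prob_component_indep_const[where x = "(j, t, c)" and g = g
        and F = "\<lambda>y r. (y * digit b k t + r) mod b = digit b k' c"
        and K = "{j} \<times> S \<times> {c}" and R = "{..<b}"])
    show "finite ({j} \<times> S \<times> {c})"
      using finite_digit_support[OF two_le_b] by (simp add: S_def)
    show "g \<omega> = g (restrict \<omega> ({j} \<times> S \<times> {c}))" for \<omega>
      unfolding g_def by (intro arg_cong[where f="\<lambda>x. x mod b"] sum.cong) auto
    show "measure_pmf.prob (entry_pmfs b (j, t, c)) {y. (y * digit b k t + r) mod b = digit b k' c} = 1 / b"
      for r
      using assms(3) \<open>k \<noteq> 0\<close> two_le_b digit_pred_mu1_neq_0[OF two_le_b] digit_less[of b] nat_dvd_not_less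
      by (auto simp: entry_pmf_def t_def intro!: prob_uniform_linear_mod[OF prime_b])
  qed (use assms(1,2) two_le_b in \<open>auto simp: g_def S_def\<close>)
  finally show ?thesis .
qed

lemma prob_column_event:
  assumes "j < s" "c < n" "mu1 b k' = mu1 b k"
  shows "prob (column_event j k k' c) = column_prob b (mu1 b k) c"
proof -
  have "mu1 b k \<le> c \<or> k \<noteq> 0 \<and> c = mu1 b k - 1 \<or> c < mu1 b k - 1"
    by (cases "k = 0") (auto simp: mu1_def)
  then show ?thesis
    using prob_column_event_beyond_mu1[OF assms] prob_column_event_pred_mu1[OF assms]
      prob_column_event_below_pred_mu1[OF assms(1,2)]
    by (auto simp: column_prob_def)
qed

lemma prob_all_column_events:
  assumes "\<forall>j<s. mu1 b (k' j) = mu1 b (k j)"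
  shows "prob {\<omega> \<in> space PM. \<forall>j<s. \<forall>c<n.
          trans_prod b (\<lambda>i c. \<omega> (j, i, c)) (k j) c = digit b (k' j) c}
    = (\<Prod>j<s. \<Prod>c<n. column_prob b (mu1 b (k j)) c)"
proof -
  define Q where "Q = (\<lambda>(j, c) \<omega>. trans_prod b (\<lambda>i c. \<omega> (j, i, c)) (k j) c = digit b (k' j) c)"
  define K :: "nat \<times> nat \<Rightarrow> (nat \<times> nat \<times> nat) set"
    where "K = (\<lambda>(j, c). {j} \<times> {i. digit b (k j) i \<noteq> 0} \<times> {c})"
  have "prob {\<omega> \<in> space PM. \<forall>j<s. \<forall>c<n.
          trans_prod b (\<lambda>i c. \<omega> (j, i, c)) (k j) c = digit b (k' j) c}
    = prob {\<omega> \<in> space PM. \<forall>jc\<in>{..<s} \<times> {..<n}. Q jc \<omega>}"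
    unfolding Q_def by (auto intro!: arg_cong[where f = prob])
  also have "\<dots> = (\<Prod>jc\<in>{..<s} \<times> {..<n}. prob {\<omega> \<in> space PM. Q jc \<omega>})"
  proof (rule prob_disjoint_blocks)
    show "finite (K jc) \<and> K jc \<subseteq> {..<s} \<times> UNIV \<times> {..<n}" if "jc \<in> {..<s} \<times> {..<n}" for jc
      using that finite_digit_support[OF two_le_b] by (auto simp: K_def)
    show "disjoint_family_on K ({..<s} \<times> {..<n})"
      by (auto simp: disjoint_family_on_def K_def)
    show "Q jc \<omega> = Q jc (restrict \<omega> (K jc))" for jc \<omega>
      unfolding Q_def K_def by (cases jc) (simp only: prod.case, subst trans_prod_restrict, auto)
  qed simp
  also have "\<dots> = (\<Prod>(j, c)\<in>{..<s} \<times> {..<n}. column_prob b (mu1 b (k j)) c)"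
    using prob_column_event assms by (intro prod.cong) (auto simp: Q_def)
  also have "\<dots> = (\<Prod>j<s. \<Prod>c<n. column_prob b (mu1 b (k j)) c)"
    by (simp add: prod.cartesian_product)
  finally show ?thesis .
qed

end

theorem lemma2p14:
  fixes b s n :: nat and k k' :: "nat \<Rightarrow> nat"
  assumes "prime b" and "s \<ge> 1"
  shows "(\<forall>j<s. \<forall>L. in_L_inf b L \<longrightarrow>
            (\<exists>l. (\<forall>c. digit b l c = trans_prod b L (k j) c) \<and> mu1 b l = mu1 b (k j)))
       \<and> ((\<forall>j<s. mu1 b (k' j) = mu1 b (k j)) \<longrightarrow> (\<forall>j<s. mu1 b (k j) \<le> n) \<longrightarrow>
            measure (rand_mats b s n)
              {\<omega> \<in> space (rand_mats b s n). \<forall>j<s. \<forall>c<n.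
                  trans_prod b (\<lambda>i c. \<omega> (j, i, c)) (k j) c = digit b (k' j) c}
            = (real b / (real b - 1)) ^ card {j \<in> {..<s}. k j \<noteq> 0}
              / real b ^ (\<Sum>j<s. mu1 b (k j)))"
proof (intro conjI impI)
  interpret random_matrices b s n
    using assms(1) by unfold_locales
  show "\<forall>j<s. \<forall>L. in_L_inf b L \<longrightarrow>
      (\<exists>l. (\<forall>c. digit b l c = trans_prod b L (k j) c) \<and> mu1 b l = mu1 b (k j))"
    using mu1_trans_prod[OF prime_b] by blast
  assume mu: "\<forall>j<s. mu1 b (k' j) = mu1 b (k j)" and le: "\<forall>j<s. mu1 b (k j) \<le> n"
  have "measure (rand_mats b s n)
      {\<omega> \<in> space (rand_mats b s n). \<forall>j<s. \<forall>c<n.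
          trans_prod b (\<lambda>i c. \<omega> (j, i, c)) (k j) c = digit b (k' j) c}
    = (\<Prod>j<s. (if k j = 0 then 1 else real b / (real b - 1)) / real b ^ mu1 b (k j))"
    using prob_all_column_events[OF mu] le prod_column_prob two_le_b
    by (simp add: PM_eq_rand_mats)
  also have "\<dots> = (\<Prod>j<s. if k j = 0 then 1 else real b / (real b - 1)) / real b ^ (\<Sum>j<s. mu1 b (k j))"
    by (simp add: prod_dividef power_sum)
  also have "(\<Prod>j<s. if k j = 0 then 1 else real b / (real b - 1))
      = (\<Prod>j\<in>{j \<in> {..<s}. k j \<noteq> 0}. real b / (real b - 1))"
    by (rule prod.mono_neutral_cong_right) auto
  finally show "measure (rand_mats b s n)
      {\<omega> \<in> space (rand_mats b s n). \<forall>j<s. \<forall>c<n.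
          trans_prod b (\<lambda>i c. \<omega> (j, i, c)) (k j) c = digit b (k' j) c}
    = (real b / (real b - 1)) ^ card {j \<in> {..<s}. k j \<noteq> 0} / real b ^ (\<Sum>j<s. mu1 b (k j))"
    by simp
qed

end
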